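(* For every square-free integer $m>1$ with $m\ne 6$, $$ \gcd(m,\varphi(m))\le m\exp\left(-\sqrt{\log 2\,\log m}\right). $$
   Context: $\varphi$ denotes Euler's totient function. *)

theory Defs
  imports Complex_Main "HOL-Number_Theory.Number_Theory" "HOL-Computational_Algebra.Squarefree"
begin

end

theory Submission
  imports Defs
begin

text \<open>
  Let \<open>g = gcd m \<phi>(m)\<close> and \<open>d = m / g\<close>. As \<open>m\<close> is squarefree, \<open>\<phi>(m)\<close> is the product
  of \<open>q - 1\<close> over the primes \<open>q | m\<close>, so \<open>g\<close> is the product of the primes \<open>p | m\<close> that
  divide some \<open>q - 1\<close>; such a \<open>q\<close> is at least \<open>2p + 1\<close> (at least 3 if \<open>p = 2\<close>). Hence the
  largest prime factor of \<open>m\<close> divides \<open>d\<close>, and every prime factor of \<open>m\<close> is at most \<open>d\<close>.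
  Let \<open>G(t)\<close> be the product of the prime factors of \<open>g\<close> that are at least \<open>t\<close>. For odd \<open>t\<close>,
  \<open>G(t)\<close> divides the product of \<open>q - 1\<close> over the prime factors \<open>q \<ge> 2t + 1\<close> of \<open>m\<close>, which
  is at most \<open>G(2t + 1) d\<close>; for \<open>t \<ge> 3\<close> a factor 2 is gained since \<open>G(t)\<close> is odd and each
  \<open>q - 1\<close> is even. Iterating along \<open>t = 2\<^sup>j - 1\<close> until \<open>2t + 1 > d\<close> gives
  \<open>2\<^sup>k g \<le> d\<^sup>k\<^sup>+\<^sup>1\<close> with \<open>2\<^sup>k\<^sup>+\<^sup>2 \<le> d + 1\<close>, and taking logarithms yields
  \<open>ln 2 \<cdot> ln m \<le> (ln d)\<^sup>2\<close>, which is the claim since \<open>g = m / d\<close>. The excluded case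
  \<open>m = 6\<close> is the only one with \<open>d = 3\<close> and \<open>g > 1\<close>.
\<close>

lemma prod_primes_dvd:
  fixes n :: nat
  assumes "finite S" and "\<And>p. p \<in> S \<Longrightarrow> prime p \<and> p dvd n"
  shows "\<Prod>S dvd n"
  using assms
proof (induction S rule: finite_induct)
  case (insert p S)
  have "coprime p (\<Prod>S)"
    using insert by (intro prod_coprime_right) (auto intro: primes_coprime)
  then show ?case using insert by (simp add: divides_mult)
qed simp

lemma squarefree_multiplicity_prime_factor:
  fixes n :: nat
  assumes "squarefree n" and "p \<in> prime_factors n"
  shows "multiplicity p n = 1"
  using assms squarefree_factorial_semiring' not_squarefree_0 by metis

lemma prod_prime_factors_squarefree:
  fixes n :: nat
  assumes "squarefree n"
  shows "\<Prod>(prime_factors n) = n"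
proof -
  have "n > 0" using assms by (metis gr0I not_squarefree_0)
  then have "n = (\<Prod>p\<in>prime_factors n. p ^ multiplicity p n)"
    by (rule prime_factorization_nat)
  also have "\<dots> = \<Prod>(prime_factors n)"
    using squarefree_multiplicity_prime_factor[OF assms] by simp
  finally show ?thesis by simp
qed

lemma totient_squarefree:
  fixes n :: nat
  assumes "squarefree n"
  shows "totient n = (\<Prod>p\<in>prime_factors n. p - 1)"
proof -
  have "n > 0" using assms by (metis gr0I not_squarefree_0)
  then show ?thesis
    using squarefree_multiplicity_prime_factor[OF assms] by (simp add: totient_formula1)
qed

lemma gcd_squarefree_eq_prod:
  fixes m n :: nat
  assumes "squarefree m"
  shows "gcd m n = \<Prod>{p \<in> prime_factors m. p dvd n}"
proof (rule dvd_antisym)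
  have "m \<noteq> 0" using assms by (metis not_squarefree_0)
  then have "\<Prod>(prime_factors (gcd m n)) dvd \<Prod>{p \<in> prime_factors m. p dvd n}"
    by (intro prod_dvd_prod_subset) (auto simp: in_prime_factors_iff)
  moreover have "squarefree (gcd m n)"
    using assms by (rule squarefree_mono[rotated]) simp
  ultimately show "gcd m n dvd \<Prod>{p \<in> prime_factors m. p dvd n}"
    by (simp add: prod_prime_factors_squarefree)
next
  have "\<Prod>{p \<in> prime_factors m. p dvd n} dvd \<Prod>(prime_factors m)"
    by (intro prod_dvd_prod_subset) auto
  moreover have "\<Prod>{p \<in> prime_factors m. p dvd n} dvd n"
    by (intro prod_primes_dvd) auto
  ultimately show "\<Prod>{p \<in> prime_factors m. p dvd n} dvd gcd m n"
    using assms by (simp add: prod_prime_factors_squarefree)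
qed

lemma prime_dvd_totient_squarefree:
  fixes m p :: nat
  assumes "squarefree m" and "prime p" and "p dvd totient m"
  shows "\<exists>q \<in> prime_factors m. p dvd q - 1"
  using assms by (simp add: totient_squarefree prime_dvd_prod_iff)

lemma prime_dvd_pred_prime_ge:
  fixes p q t :: nat
  assumes "prime p" "prime q" "p dvd q - 1" "odd t" "t \<le> p"
  shows "2 * t + 1 \<le> q"
proof -
  have "q \<ge> 2" "p \<ge> 2" using assms prime_ge_2_nat by auto
  then have "p < q" using assms(3) dvd_imp_le[of p "q - 1"] by linarith
  show ?thesis
  proof (cases "p = 2")
    case True
    then show ?thesis using assms \<open>p < q\<close> by presburger
  next
    case False
    then have "odd p" "odd q"
      using assms \<open>p < q\<close> \<open>p \<ge> 2\<close> prime_odd_nat by auto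
    obtain k where k: "q - 1 = p * k" using assms(3) by blast
    have "even (q - 1)" using \<open>odd q\<close> by presburger
    then have "even (p * k)" by (simp only: k)
    then have "even k" using \<open>odd p\<close> by simp
    moreover have "k \<noteq> 0" using k \<open>q \<ge> 2\<close> by (cases "k = 0") auto
    ultimately have "k \<ge> 2" by presburger
    then have "q - 1 \<ge> p * 2" using k by simp
    then show ?thesis using assms(5) \<open>q \<ge> 2\<close> by linarith
  qed
qed

text \<open>For squarefree \<open>m\<close>, \<open>gcd_totient_part m t\<close> is \<open>G(t)\<close> and \<open>gcd_totient_cofactor m\<close>
  is \<open>d\<close> from the sketch above.\<close>

definition gcd_totient_primes :: "nat \<Rightarrow> nat set" where
  "gcd_totient_primes m = {p \<in> prime_factors m. p dvd totient m}"

definition gcd_totient_part :: "nat \<Rightarrow> nat \<Rightarrow> nat" where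
  "gcd_totient_part m t = \<Prod>{p \<in> gcd_totient_primes m. t \<le> p}"

definition gcd_totient_cofactor :: "nat \<Rightarrow> nat" where
  "gcd_totient_cofactor m = \<Prod>(prime_factors m - gcd_totient_primes m)"

lemma gcd_totient_eq_part_1:
  assumes "squarefree m"
  shows "gcd m (totient m) = gcd_totient_part m 1"
proof -
  have "1 \<le> p" if "p \<in> prime_factors m" for p
    using that prime_ge_1_nat in_prime_factors_imp_prime by blast
  then have "{p \<in> gcd_totient_primes m. 1 \<le> p} = gcd_totient_primes m"
    by (auto simp: gcd_totient_primes_def)
  moreover have "gcd m (totient m) = \<Prod>(gcd_totient_primes m)"
    unfolding gcd_totient_primes_def by (rule gcd_squarefree_eq_prod[OF assms])
  ultimately show ?thesis by (simp add: gcd_totient_part_def)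
qed

lemma gcd_totient_mult_cofactor:
  assumes "squarefree m"
  shows "gcd m (totient m) * gcd_totient_cofactor m = m"
proof -
  have "gcd m (totient m) * gcd_totient_cofactor m = \<Prod>(prime_factors m)"
    unfolding gcd_totient_cofactor_def gcd_squarefree_eq_prod[OF assms]
    by (subst prod.subset_diff[of "gcd_totient_primes m"]) (auto simp: gcd_totient_primes_def)
  then show ?thesis using assms by (simp add: prod_prime_factors_squarefree)
qed

lemma gcd_totient_primes_witness:
  assumes "squarefree m" and "p \<in> gcd_totient_primes m" and "odd t" and "t \<le> p"
  shows "\<exists>q \<in> prime_factors m. p dvd q - 1 \<and> 2 * t + 1 \<le> q"
proof -
  have "prime p" "p dvd totient m" using assms(2) by (auto simp: gcd_totient_primes_def)
  then obtain q where "q \<in> prime_factors m" "p dvd q - 1"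
    using prime_dvd_totient_squarefree[OF assms(1)] by blast
  with \<open>prime p\<close> assms(3,4) show ?thesis
    by (meson in_prime_factors_imp_prime prime_dvd_pred_prime_ge)
qed

lemma prime_factor_le_gcd_totient_cofactor:
  assumes "squarefree m" and "q \<in> prime_factors m"
  shows "q \<le> gcd_totient_cofactor m"
proof -
  \<comment> \<open>the largest prime factor divides no \<open>q - 1\<close> with \<open>q | m\<close>\<close>
  define P where "P = Max (prime_factors m)"
  have "P \<in> prime_factors m"
    unfolding P_def using assms(2) by (intro Max_in) auto
  have "q \<le> P"
    unfolding P_def using assms(2) by (intro Max_ge) auto
  have "P \<notin> gcd_totient_primes m"
  proof
    assume "P \<in> gcd_totient_primes m"
    moreover have "1 \<le> P"
      using \<open>P \<in> prime_factors m\<close> prime_ge_1_nat in_prime_factors_imp_prime by blast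
    ultimately obtain r where r: "r \<in> prime_factors m" "P dvd r - 1" "2 * 1 + 1 \<le> r"
      using gcd_totient_primes_witness[OF assms(1) _ odd_one] by blast
    then have "P < r" using dvd_imp_le[of P "r - 1"] by linarith
    moreover have "r \<le> P"
      unfolding P_def using r(1) by (intro Max_ge) auto
    ultimately show False by simp
  qed
  then have "P dvd gcd_totient_cofactor m"
    unfolding gcd_totient_cofactor_def using \<open>P \<in> prime_factors m\<close> by (intro dvd_prodI) auto
  moreover have "gcd_totient_cofactor m > 0"
    unfolding gcd_totient_cofactor_def by (intro prod_pos) (auto intro: prime_factors_gt_0_nat)
  ultimately have "P \<le> gcd_totient_cofactor m" by (rule dvd_imp_le)
  with \<open>q \<le> P\<close> show ?thesis by (rule le_trans)
qed

lemma gcd_totient_part_pos: "0 < gcd_totient_part m t"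
  unfolding gcd_totient_part_def gcd_totient_primes_def
  by (intro prod_pos) (auto intro: prime_factors_gt_0_nat)

lemma gcd_totient_cofactor_ge_2:
  assumes "squarefree m" and "1 < m"
  shows "2 \<le> gcd_totient_cofactor m"
proof -
  obtain q where "prime q" "q dvd m" using prime_factor_nat[of m] assms(2) by auto
  then have "q \<in> prime_factors m" using assms(2) by (auto intro: prime_factorsI)
  then have "q \<le> gcd_totient_cofactor m"
    by (rule prime_factor_le_gcd_totient_cofactor[OF assms(1)])
  with \<open>prime q\<close> show ?thesis using prime_ge_2_nat by (meson le_trans)
qed

lemma gcd_totient_part_vanish:
  assumes "squarefree m" and "odd t" and "gcd_totient_cofactor m < 2 * t + 1"
  shows "gcd_totient_part m t = 1"
proof -
  have "{p \<in> gcd_totient_primes m. t \<le> p} = {}"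
  proof (rule equals0I)
    fix p assume "p \<in> {p \<in> gcd_totient_primes m. t \<le> p}"
    then obtain q where "q \<in> prime_factors m" "2 * t + 1 \<le> q"
      using gcd_totient_primes_witness[OF assms(1) _ assms(2)] by blast
    then show False
      using prime_factor_le_gcd_totient_cofactor[OF assms(1)] assms(3) by (meson le_trans not_le)
  qed
  then show ?thesis unfolding gcd_totient_part_def by (simp only: prod.empty)
qed

lemma gcd_totient_part_dvd_prod_pred:
  assumes "squarefree m" and "odd t"
  shows "gcd_totient_part m t dvd (\<Prod>q \<in> {q \<in> prime_factors m. 2 * t + 1 \<le> q}. q - 1)"
  unfolding gcd_totient_part_def
proof (rule prod_primes_dvd)
  fix p assume p: "p \<in> {p \<in> gcd_totient_primes m. t \<le> p}"
  then obtain q where "q \<in> prime_factors m" "p dvd q - 1" "2 * t + 1 \<le> q"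
    using gcd_totient_primes_witness[OF assms(1) _ assms(2)] by blast
  moreover have "prime p" using p by (auto simp: gcd_totient_primes_def)
  ultimately show "prime p \<and> p dvd (\<Prod>q \<in> {q \<in> prime_factors m. 2 * t + 1 \<le> q}. q - 1)"
    by (auto intro: dvd_trans[OF _ dvd_prodI])
qed (simp add: gcd_totient_primes_def)

lemma prod_pred_prime_factors_ge_le:
  "(\<Prod>q \<in> {q \<in> prime_factors m. s \<le> q}. q - 1) \<le> gcd_totient_part m s * gcd_totient_cofactor m"
proof -
  let ?Q = "{q \<in> prime_factors m. s \<le> q}" and ?B = "gcd_totient_primes m"
  have "(\<Prod>q \<in> ?Q. q - 1) \<le> \<Prod>?Q" by (rule prod_mono) auto
  also have "\<dots> = \<Prod>(?Q \<inter> ?B) * \<Prod>(?Q - ?B)" by (rule prod.Int_Diff) simp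
  also have "?Q \<inter> ?B = {p \<in> ?B. s \<le> p}" by (auto simp: gcd_totient_primes_def)
  also have "\<Prod>(?Q - ?B) \<le> gcd_totient_cofactor m"
    unfolding gcd_totient_cofactor_def
    by (intro dvd_imp_le prod_dvd_prod_subset prod_pos) (auto intro: prime_factors_gt_0_nat)
  finally show ?thesis by (simp add: gcd_totient_part_def)
qed

lemma prod_pred_prime_factors_pos:
  fixes m s :: nat
  shows "0 < (\<Prod>q \<in> {q \<in> prime_factors m. s \<le> q}. q - 1)"
proof (intro prod_pos ballI)
  fix q assume "q \<in> {q \<in> prime_factors m. s \<le> q}"
  then have "prime q" by blast
  then show "0 < q - 1" using prime_gt_1_nat by simp
qed

lemma gcd_totient_part_le:
  assumes "squarefree m" and "odd t"
  shows "gcd_totient_part m t \<le> gcd_totient_part m (2 * t + 1) * gcd_totient_cofactor m"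
  using dvd_imp_le[OF gcd_totient_part_dvd_prod_pred[OF assms] prod_pred_prime_factors_pos]
    prod_pred_prime_factors_ge_le by (rule le_trans)

lemma gcd_totient_part_double_le:
  assumes "squarefree m" and "1 < m" and "odd t" and "3 \<le> t"
  shows "2 * gcd_totient_part m t \<le> gcd_totient_part m (2 * t + 1) * gcd_totient_cofactor m"
proof (cases "{p \<in> gcd_totient_primes m. t \<le> p} = {}")
  case True
  then have "gcd_totient_part m t = 1" unfolding gcd_totient_part_def by (simp only: prod.empty)
  moreover have "1 * 2 \<le> gcd_totient_part m (2 * t + 1) * gcd_totient_cofactor m"
    using gcd_totient_part_pos gcd_totient_cofactor_ge_2[OF assms(1,2)]
    by (intro mult_le_mono) (simp_all add: Suc_le_eq)
  ultimately show ?thesis by simp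
next
  case False
  let ?\<Phi> = "\<Prod>q \<in> {q \<in> prime_factors m. 2 * t + 1 \<le> q}. q - 1"
  obtain p where "p \<in> gcd_totient_primes m" "t \<le> p" using False by blast
  then obtain q where q: "q \<in> prime_factors m" "2 * t + 1 \<le> q"
    using gcd_totient_primes_witness[OF assms(1) _ assms(3)] by blast
  then have "odd q" using assms(4) by (intro prime_odd_nat) auto
  then have "2 dvd q - 1" by presburger
  moreover have "q - 1 dvd ?\<Phi>" using q by (intro dvd_prodI) auto
  ultimately have "2 dvd ?\<Phi>" by (rule dvd_trans)
  moreover note gcd_totient_part_dvd_prod_pred[OF assms(1,3)]
  moreover have "coprime 2 (gcd_totient_part m t)"
    unfolding gcd_totient_part_def
  proof (rule prod_coprime_right)
    fix p assume "p \<in> {p \<in> gcd_totient_primes m. t \<le> p}"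
    then have "prime p" "p \<noteq> 2" using assms(4) by (auto simp: gcd_totient_primes_def)
    then show "coprime 2 p" by (intro primes_coprime) auto
  qed
  ultimately have "2 * gcd_totient_part m t dvd ?\<Phi>" by (rule divides_mult)
  then have "2 * gcd_totient_part m t \<le> ?\<Phi>"
    using prod_pred_prime_factors_pos by (rule dvd_imp_le)
  then show ?thesis using prod_pred_prime_factors_ge_le by (rule le_trans)
qed

lemma pow2_mult_gcd_totient_le:
  assumes "squarefree m" and "1 < m"
  shows "2 ^ k * gcd m (totient m)
           \<le> gcd_totient_cofactor m ^ (k + 1) * gcd_totient_part m (2 ^ (k + 2) - 1)"
proof (induction k)
  case 0
  show ?case
    using gcd_totient_part_le[OF assms(1), of 1] gcd_totient_eq_part_1[OF assms(1)]
    by (simp add: mult.commute)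
next
  case (Suc k)
  define t :: nat where "t = 2 ^ (k + 2) - 1"
  have "(4::nat) \<le> 2 ^ (k + 2)"
    using power_increasing[of 2 "k + 2" "2::nat"] by simp
  moreover have "odd (x - 1) \<and> 3 \<le> x - 1 \<and> 2 * (x - 1) + 1 = 2 * x - 1"
    if "4 \<le> x" and "even x" for x :: nat
    using that by presburger
  ultimately have "odd t" "3 \<le> t" "2 * t + 1 = 2 ^ (Suc k + 2) - 1"
    unfolding t_def by simp_all
  let ?d = "gcd_totient_cofactor m"
  have "2 ^ Suc k * gcd m (totient m) \<le> 2 * (?d ^ (k + 1) * gcd_totient_part m t)"
    using Suc.IH unfolding t_def by simp
  also have "\<dots> = ?d ^ (k + 1) * (2 * gcd_totient_part m t)" by simp
  also have "\<dots> \<le> ?d ^ (k + 1) * (gcd_totient_part m (2 * t + 1) * ?d)"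
    using gcd_totient_part_double_le[OF assms \<open>odd t\<close> \<open>3 \<le> t\<close>] by simp
  also have "\<dots> = ?d ^ (Suc k + 1) * gcd_totient_part m (2 ^ (Suc k + 2) - 1)"
    unfolding \<open>2 * t + 1 = _\<close> by simp
  finally show ?case .
qed

lemma gcd_totient_cofactor_ge_4:
  assumes "squarefree m" and "m \<noteq> 6" and "gcd m (totient m) \<noteq> 1"
  shows "4 \<le> gcd_totient_cofactor m"
proof -
  let ?B = "gcd_totient_primes m" and ?d = "gcd_totient_cofactor m"
  have g: "gcd m (totient m) = \<Prod>?B"
    unfolding gcd_totient_primes_def by (rule gcd_squarefree_eq_prod[OF assms(1)])
  have witness: "\<exists>q. p dvd q - 1 \<and> 3 \<le> q \<and> q \<le> ?d" if p: "p \<in> ?B" for p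
  proof -
    have "1 \<le> p"
      using p prime_ge_1_nat in_prime_factors_imp_prime unfolding gcd_totient_primes_def by blast
    then obtain q where "q \<in> prime_factors m" "p dvd q - 1" "2 * 1 + 1 \<le> q"
      using gcd_totient_primes_witness[OF assms(1) p odd_one] by blast
    then show ?thesis using prime_factor_le_gcd_totient_cofactor[OF assms(1)] by auto
  qed
  have "?B \<noteq> {}" using assms(3) g by auto
  then obtain p where "p \<in> ?B" by blast
  then have "3 \<le> ?d" using witness by (meson le_trans)
  moreover have "?d \<noteq> 3"
  proof
    assume "?d = 3"
    have "?B \<subseteq> {2}"
    proof
      fix p assume "p \<in> ?B"
      then obtain q where "p dvd q - 1" "3 \<le> q" "q \<le> ?d" using witness by blast
      then have "p dvd 2" using \<open>?d = 3\<close> by (simp add: le_antisym)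
      then have "p \<le> 2" by (simp add: dvd_imp_le)
      moreover have "2 \<le> p"
        using \<open>p \<in> ?B\<close> prime_ge_2_nat in_prime_factors_imp_prime
        unfolding gcd_totient_primes_def by blast
      ultimately show "p \<in> {2}" by simp
    qed
    then have "?B = {2}" using \<open>p \<in> ?B\<close> by auto
    then have "m = 2 * 3" using gcd_totient_mult_cofactor[OF assms(1)] g \<open>?d = 3\<close> by simp
    with assms(2) show False by simp
  qed
  ultimately show ?thesis by simp
qed

lemma exists_pow2_mult_gcd_totient_le:
  assumes "squarefree m" and "1 < m" and "4 \<le> gcd_totient_cofactor m"
  shows "\<exists>k. 2 ^ k * gcd m (totient m) \<le> gcd_totient_cofactor m ^ (k + 1)
             \<and> 2 ^ (k + 2) \<le> gcd_totient_cofactor m + 1"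
proof -
  let ?d = "gcd_totient_cofactor m"
  obtain n where n: "2 ^ n \<le> ?d + 1" "?d + 1 < 2 ^ (n + 1)"
    using ex_power_ivl1[of 2 "?d + 1"] by auto
  have "2 ^ 2 < (2::nat) ^ (n + 1)" using n(2) assms(3) by simp
  then have "2 \<le> n" using power_less_imp_less_exp[of "2::nat" 2 "n + 1"] by simp
  then obtain k where k: "n = k + 2" using le_Suc_ex by (metis add.commute)
  define x :: nat where "x = 2 ^ n"
  have "even x" "2 * x = 2 ^ (n + 1)" unfolding x_def using \<open>2 \<le> n\<close> by simp_all
  then have "odd (x - 1)" "?d < 2 * (x - 1) + 1" using n(2) by presburger+
  then have "gcd_totient_part m (x - 1) = 1" by (rule gcd_totient_part_vanish[OF assms(1)])
  then have "2 ^ k * gcd m (totient m) \<le> ?d ^ (k + 1)"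
    using pow2_mult_gcd_totient_le[OF assms(1,2), of k] unfolding x_def k by simp
  with n(1) show ?thesis unfolding k by blast
qed

lemma four_ln_2_le_five_ln_7_div_4: "4 * ln 2 \<le> 5 * ln (7 / 4 :: real)"
proof -
  have "ln ((2::real) ^ 4) \<le> ln ((7 / 4) ^ 5)"
    by (rule ln_mono) (simp_all add: power_divide)
  then show ?thesis using ln_realpow[of 2 4] ln_realpow[of "7 / 4" 5] by simp
qed

lemma sq_le_sq_add_mult:
  fixes a e :: real and k :: nat
  assumes "0 < a" and "a \<le> e \<or> (1 \<le> k \<and> 4 * a \<le> 5 * e)"
  shows "a\<^sup>2 \<le> e\<^sup>2 + k * a * e"
  using assms(2)
proof
  assume "a \<le> e"
  then have "a\<^sup>2 \<le> e\<^sup>2" using assms(1) by (intro power_mono) auto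
  moreover have "0 \<le> k * a * e" using assms(1) \<open>a \<le> e\<close> by simp
  ultimately show ?thesis by simp
next
  assume "1 \<le> k \<and> 4 * a \<le> 5 * e"
  then have "4 / 5 * a \<le> e" "1 \<le> real k" by auto
  have "(4 / 5 * a)\<^sup>2 \<le> e\<^sup>2" using \<open>4 / 5 * a \<le> e\<close> assms(1) by (intro power_mono) auto
  moreover have "(4 / 5 * a)\<^sup>2 = 16 / 25 * a\<^sup>2" by (simp add: power2_eq_square)
  moreover have "a * (4 / 5 * a) \<le> a * e" using \<open>4 / 5 * a \<le> e\<close> assms(1) by simp
  then have "4 / 5 * a\<^sup>2 \<le> a * e" by (simp add: power2_eq_square)
  moreover have "1 * (a * e) \<le> k * (a * e)"
    using \<open>1 \<le> real k\<close> \<open>4 / 5 * a \<le> e\<close> assms(1) by (intro mult_right_mono) auto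
  ultimately have "a\<^sup>2 \<le> e\<^sup>2 + k * (a * e)" using zero_le_power2[of a] by linarith
  then show ?thesis by (simp add: mult.assoc)
qed

lemma ln_2_mult_ln_le_ln_sq:
  fixes g d k :: nat
  assumes "1 \<le> g" and "4 \<le> d" and "2 ^ k * g \<le> d ^ (k + 1)" and "2 ^ (k + 2) \<le> d + 1"
  shows "ln 2 * ln (real (g * d)) \<le> (ln (real d))\<^sup>2"
proof -
  define a L where "a = ln (2::real)" and "L = ln (real d)"
  define e where "e = L - (k + 1) * a"
  have "0 < a" unfolding a_def by simp
  have "real (2 ^ k * g) \<le> real (d ^ (k + 1))" using assms(3) by (simp only: of_nat_le_iff)
  then have "ln (real (2 ^ k * g)) \<le> ln (real (d ^ (k + 1)))" using assms(1) by (intro ln_mono) auto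
  then have "k * a + ln g \<le> (k + 1) * L"
    using assms(1,2) unfolding a_def L_def by (simp add: ln_mult ln_realpow algebra_simps)
  then have ln_m: "ln (real (g * d)) \<le> (k + 2) * L - k * a"
    using assms(1,2) by (simp add: ln_mult L_def algebra_simps)
  have "a \<le> e \<or> (1 \<le> k \<and> 4 * a \<le> 5 * e)"
  proof (cases "k = 0")
    case True
    have "ln 4 \<le> L" unfolding L_def using assms(2) by simp
    moreover have "ln (4::real) = 2 * a" unfolding a_def using ln_realpow[of 2 2] by simp
    ultimately show ?thesis using True unfolding e_def by simp
  next
    case False
    have "(2::real) ^ 1 \<le> 2 ^ k" using False by (intro power_increasing) auto
    moreover have "real (2 ^ (k + 2)) \<le> real (d + 1)" using assms(4) by (simp only: of_nat_le_iff)
    ultimately have "7 / 4 * 2 ^ (k + 1) \<le> real d" by simp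
    then have "ln (7 / 4 * 2 ^ (k + 1)) \<le> L" unfolding L_def by (rule ln_mono) simp
    moreover have "ln (7 / 4 * 2 ^ (k + 1)) = ln (7 / 4) + ln ((2::real) ^ (k + 1))"
      by (rule ln_mult_pos) simp_all
    moreover have "ln ((2::real) ^ (k + 1)) = (k + 1) * a"
      unfolding a_def using ln_realpow[of 2 "k + 1"] by simp
    ultimately have "ln (7 / 4) + (k + 1) * a \<le> L" by linarith
    then show ?thesis
      using False four_ln_2_le_five_ln_7_div_4 unfolding e_def a_def by simp
  qed
  then have "a\<^sup>2 \<le> e\<^sup>2 + k * a * e" by (rule sq_le_sq_add_mult[OF \<open>0 < a\<close>])
  \<comment> \<open>\<open>L\<^sup>2 - a ((k + 2) L - k a) = e\<^sup>2 + k a e - a\<^sup>2\<close>\<close>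
  then have "a * ((k + 2) * L - k * a) \<le> L\<^sup>2"
    unfolding e_def by (simp add: power2_eq_square algebra_simps)
  moreover have "a * ln (real (g * d)) \<le> a * ((k + 2) * L - k * a)"
    using ln_m \<open>0 < a\<close> by simp
  ultimately show ?thesis unfolding a_def L_def by linarith
qed

lemma le_mult_exp_neg_sqrt:
  fixes c g d :: real
  assumes "0 \<le> g" and "1 \<le> d" and "c * ln (g * d) \<le> (ln d)\<^sup>2"
  shows "g \<le> g * d * exp (- sqrt (c * ln (g * d)))"
proof -
  have "sqrt (c * ln (g * d)) \<le> sqrt ((ln d)\<^sup>2)" using assms(3) by (rule real_sqrt_le_mono)
  also have "\<dots> = ln d" using assms(2) by simp
  finally have "exp (- ln d) \<le> exp (- sqrt (c * ln (g * d)))" by simp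
  moreover have "g * d * exp (- ln d) = g" using assms(2) by (simp add: exp_minus)
  ultimately show ?thesis
    using assms(1,2) by (metis mult_left_mono mult_nonneg_nonneg zero_le_one order.trans)
qed

theorem lemma2p1:
  fixes m :: nat
  assumes "squarefree m" and "m > 1" and "m \<noteq> 6"
  shows "real (gcd m (totient m)) \<le> real m * exp (- sqrt (ln 2 * ln (real m)))"
proof -
  let ?g = "gcd m (totient m)" and ?d = "gcd_totient_cofactor m"
  have m: "m = ?g * ?d" using gcd_totient_mult_cofactor[OF assms(1)] by simp
  have "2 \<le> ?d" using gcd_totient_cofactor_ge_2[OF assms(1,2)] .
  have "ln 2 * ln (real (?g * ?d)) \<le> (ln (real ?d))\<^sup>2"
  proof (cases "?g = 1")
    case True
    have "ln 2 \<le> ln (real ?d)" "0 \<le> ln (real ?d)" using \<open>2 \<le> ?d\<close> by simp_all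
    then show ?thesis using True by (simp add: power2_eq_square mult_right_mono)
  next
    case False
    then have "4 \<le> ?d" by (rule gcd_totient_cofactor_ge_4[OF assms(1,3)])
    moreover obtain k where "2 ^ k * ?g \<le> ?d ^ (k + 1)" "2 ^ (k + 2) \<le> ?d + 1"
      using exists_pow2_mult_gcd_totient_le[OF assms(1,2) \<open>4 \<le> ?d\<close>] by blast
    moreover have "1 \<le> ?g" using assms(2) by (simp add: Suc_le_eq)
    ultimately show ?thesis by (intro ln_2_mult_ln_le_ln_sq)
  qed
  then have "real ?g \<le> real ?g * real ?d * exp (- sqrt (ln 2 * ln (real ?g * real ?d)))"
    using \<open>2 \<le> ?d\<close> by (intro le_mult_exp_neg_sqrt) simp_all
  then show ?thesis using m by (metis of_nat_mult)
qed

end
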